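(* Let $J\in\mathbb{R}^{m\times n}$ have full column rank, let $H\in\mathbb{R}^{m\times m}$ be symmetric positive definite, $q\in\mathbb{R}^m$, $c\in\mathbb{R}$, and consider minimizing $L(\theta)=\mathcal{L}(J\theta)$ with $\mathcal{L}(v)=\tfrac12 v^\top Hv+v^\top q+c$. Assume strong consistency: (1) there is $\theta^*$ with $J\theta^*=\arg\min_v\mathcal{L}(v)$ (equivalently $HJ\theta^*+q=0$), and (2) $\mathrm{range}(HJ)\subseteq\mathrm{range}(J)$. Consider SNGD $$\theta_{t+1}=\theta_t-\eta\,J_S^{+(\lambda)}(H_SJ\theta_t+q_S),$$ with batch size $k$, regularization $\lambda\ge0$, step size $\eta>0$, where at each iteration $S\subseteq\{1,\dots,m\}$, $|S|=k$, is drawn uniformly without replacement, independently across iterations. Let $P(S)=J_S^{+(\lambda)}J_S$, $\overline{P}=\mathbb{E}_S[P(S)]$, $M=\overline{P}J^+HJ$, and let $\xi(\lambda)$ be the minimum real part of any eigenvalue of $M$ (as a function of $\lambda$). Then: 1. For fixed $\lambda$, if $\xi(\lambda)<0$, then there exists an initial guess $\theta_0$ such that SNGD is divergent (does not converge to $\theta^*$) for every choice of $\eta>0$. 2. Conversely, there exists $\lambda_0$ such that for every $\lambda>\lambda_0$ we have $\xi(\lambda)>0$ and SNGD is convergent (to $\theta^*$, in mean square) for every initial guess $\theta_0$ provided the step size $\eta$ is small enough.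
   Context: $J_S$, $H_S$ denote the rows of $J$, $H$ indexed by $S$, and $q_S$ the corresponding entries of $q$. $J_S^{+(\lambda)}=(J_S^\top J_S+\lambda I)^{-1}J_S^\top=J_S^\top(J_SJ_S^\top+\lambda I)^{-1}$ (Moore–Penrose pseudoinverse when $\lambda=0$), and $J^+=(J^\top J)^{-1}J^\top$. *)

theory Defs
  imports "HOL-Analysis.Analysis" "HOL-Probability.Probability"
begin

text \<open>Row selection: the m x m diagonal 0/1 matrix keeping exactly the rows indexed by S.
  J_S is represented as rowsel S ** J (rows outside S set to zero).\<close>
definition rowsel :: "'m::finite set \<Rightarrow> real^'m^'m" where
  "rowsel S = (\<chi> i j. if i = j \<and> i \<in> S then 1 else 0)"

definition mp_pinv :: "real^'n::finite^'m::finite \<Rightarrow> real^'m^'n" where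
  "mp_pinv A = (THE X. A ** X ** A = A \<and> X ** A ** X = X \<and>
       transpose (A ** X) = A ** X \<and> transpose (X ** A) = X ** A)"

definition reg_pinv :: "real \<Rightarrow> real^'n::finite^'m::finite \<Rightarrow> real^'m^'n" where
  "reg_pinv lam A = (if lam = 0 then mp_pinv A
       else matrix_inv (transpose A ** A + mat lam) ** transpose A)"

definition batches :: "nat \<Rightarrow> 'm::finite set set" where
  "batches k = {S. card S = k}"

definition Pmat :: "real \<Rightarrow> real^'n::finite^'m::finite \<Rightarrow> 'm set \<Rightarrow> real^'n^'n" where
  "Pmat lam J S = reg_pinv lam (rowsel S ** J) ** (rowsel S ** J)"

definition Pbar :: "real \<Rightarrow> real^'n::finite^'m::finite \<Rightarrow> nat \<Rightarrow> real^'n^'n" where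
  "Pbar lam J k = (1 / real (card (batches k :: 'm set set))) *\<^sub>R (\<Sum>S\<in>batches k. Pmat lam J S)"

definition Jplus :: "real^'n::finite^'m::finite \<Rightarrow> real^'m^'n" where
  "Jplus J = matrix_inv (transpose J ** J) ** transpose J"

definition Mmat :: "real \<Rightarrow> real^'n::finite^'m::finite \<Rightarrow> real^'m^'m \<Rightarrow> nat \<Rightarrow> real^'n^'n" where
  "Mmat lam J H k = Pbar lam J k ** Jplus J ** H ** J"

definition is_eigenvalue :: "real^'n::finite^'n \<Rightarrow> complex \<Rightarrow> bool" where
  "is_eigenvalue M \<mu> \<longleftrightarrow> (\<exists>v::complex^'n. v \<noteq> 0 \<and>
       (\<chi> i j. complex_of_real (M $ i $ j)) *v v = \<mu> *s v)"

definition xi :: "real^'n::finite^'m::finite \<Rightarrow> real^'m^'m \<Rightarrow> nat \<Rightarrow> real \<Rightarrow> real" where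
  "xi J H k lam = Min {Re \<mu> | \<mu>. is_eigenvalue (Mmat lam J H k) \<mu>}"

definition quad_loss :: "real^'m::finite^'m \<Rightarrow> real^'m \<Rightarrow> real \<Rightarrow> real^'m \<Rightarrow> real" where
  "quad_loss H q c v = (1/2) * (v \<bullet> (H *v v)) + v \<bullet> q + c"

definition sngd_step :: "real \<Rightarrow> real \<Rightarrow> real^'n::finite^'m::finite \<Rightarrow> real^'m^'m \<Rightarrow> real^'m
      \<Rightarrow> 'm set \<Rightarrow> real^'n \<Rightarrow> real^'n" where
  "sngd_step lam eta J H q S \<theta> =
     \<theta> - eta *\<^sub>R (reg_pinv lam (rowsel S ** J) *v (rowsel S *v ((H ** J) *v \<theta> + q)))"

primrec sngd_pmf :: "real \<Rightarrow> real \<Rightarrow> real^'n::finite^'m::finite \<Rightarrow> real^'m^'m \<Rightarrow> real^'m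
      \<Rightarrow> nat \<Rightarrow> real^'n \<Rightarrow> nat \<Rightarrow> (real^'n) pmf" where
  "sngd_pmf lam eta J H q k \<theta>0 0 = return_pmf \<theta>0"
| "sngd_pmf lam eta J H q k \<theta>0 (Suc t) =
     bind_pmf (sngd_pmf lam eta J H q k \<theta>0 t)
       (\<lambda>\<theta>. map_pmf (\<lambda>S. sngd_step lam eta J H q S \<theta>) (pmf_of_set (batches k)))"

definition msq_err :: "real \<Rightarrow> real \<Rightarrow> real^'n::finite^'m::finite \<Rightarrow> real^'m^'m \<Rightarrow> real^'m
      \<Rightarrow> nat \<Rightarrow> real^'n \<Rightarrow> real^'n \<Rightarrow> nat \<Rightarrow> real" where
  "msq_err lam eta J H q k \<theta>0 \<theta>s t =
     measure_pmf.expectation (sngd_pmf lam eta J H q k \<theta>0 t) (\<lambda>\<theta>. (norm (\<theta> - \<theta>s))\<^sup>2)"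

end

theory Submission
  imports Defs "HOL-Computational_Algebra.Fundamental_Theorem_Algebra"
begin

text \<open>
  With \<open>B = J\<^sup>+ H J\<close>, stationarity \<open>H J \<theta>* + q = 0\<close> and the range inclusion \<open>J B = H J\<close>,
  the error \<open>e = \<theta> - \<theta>*\<close> evolves as \<open>e' = e - \<eta> P(S) B e\<close>. Averaging over the batch, the mean
  error follows the deterministic iteration \<open>e' = (I - \<eta> M) e\<close>, and by Jensen the mean-square
  error dominates the squared norm of the mean. If \<open>M\<close> has an eigenvalue \<open>\<mu>\<close> with negative real
  part, start from the real part of an eigenvector: the mean error then carries the factor
  \<open>(1 - \<eta> \<mu>)\<^sup>t\<close> of modulus at least one, so SNGD diverges for every \<open>\<eta>\<close>.

  For large \<open>\<lambda>\<close>, \<open>\<lambda> P(S)\<close> is within \<open>O(1/\<lambda>)\<close> of the batch Gram matrix \<open>J\<^sub>S\<^sup>T J\<^sub>S\<close>, and since every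
  row lies in the same number of batches these average to a positive multiple of \<open>J\<^sup>T J\<close>. Hence
  \<open>x\<^sup>T K M x \<ge> (\<beta>/\<lambda>) |x|\<^sup>2\<close> for the positive definite \<open>K = J\<^sup>T H J\<close>. This forces every eigenvalue of
  \<open>M\<close> into the right half-plane, and makes \<open>e\<^sup>T K e\<close> a Lyapunov function that contracts
  geometrically in expectation once \<open>\<eta>\<close> is small.
\<close>

section \<open>Matrices and quadratic forms\<close>

lemma matrix_vector_mult_mat: "mat c *v x = c *s (x :: 'a::comm_semiring_1^'n::finite)"
  by (simp add: vec_eq_iff matrix_vector_mult_def mat_def if_distrib[of "\<lambda>a. a * _"] cong: if_cong)

lemma matrix_vector_mult_scalar_commute:
  "A *v (c *s x) = c *s (A *v x)" for A :: "'a::comm_semiring_1^'n::finite^'m::finite"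
  by (simp add: vec_eq_iff matrix_vector_mult_def sum_distrib_left algebra_simps)

lemma sum_matrix_vector_mult: "(\<Sum>S\<in>X. A S) *v y = (\<Sum>S\<in>X. A S *v y)"
  for A :: "'s \<Rightarrow> real^'n::finite^'m::finite"
  by (induction X rule: infinite_finite_induct) (auto simp: matrix_vector_mult_add_rdistrib)

lemma matrix_vector_mult_sum: "A *v (\<Sum>S\<in>X. f S) = (\<Sum>S\<in>X. A *v f S)"
  for A :: "real^'n::finite^'m::finite"
  by (induction X rule: infinite_finite_induct) (auto simp: matrix_vector_right_distrib)

lemma matrix_inv_mult:
  fixes A :: "'a::semiring_1^'n::finite^'n"
  assumes "invertible A"
  shows "A ** matrix_inv A = mat 1" and "matrix_inv A ** A = mat 1"
  using someI_ex[OF assms[unfolded invertible_def]] unfolding matrix_inv_def by auto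

lemma invertible_if_ker_trivial:
  fixes A :: "'a::field^'n::finite^'n"
  assumes "\<And>x. A *v x = 0 \<Longrightarrow> x = 0"
  shows "invertible A"
  using assms matrix_left_invertible_ker invertible_left_inverse by blast

lemma inner_transpose_mult: "x \<bullet> (transpose A *v y) = (A *v x) \<bullet> y"
  for A :: "real^'n::finite^'m::finite"
  by (metis dot_lmul_matrix inner_commute transpose_matrix_vector)

lemma inner_gram_mult: "x \<bullet> ((transpose A ** A) *v x) = (A *v x) \<bullet> (A *v x)"
  for A :: "real^'n::finite^'m::finite"
  by (metis inner_transpose_mult matrix_vector_mul_assoc)

lemma matrix_vector_mult_bounded:
  fixes A :: "real^'n::finite^'m::finite"
  obtains C where "C \<ge> 0" and "\<And>x. norm (A *v x) \<le> C * norm x"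
  using onorm[OF matrix_vector_mul_bounded_linear[of A]] onorm_pos_le[OF matrix_vector_mul_bounded_linear[of A]]
  by blast

lemma matrix_vector_mult_bounded_below:
  fixes A :: "real^'n::finite^'m::finite"
  assumes "\<And>x. A *v x = 0 \<Longrightarrow> x = 0"
  obtains e where "e > 0" and "\<And>x. e * norm x \<le> norm (A *v x)"
  using injective_imp_isometric[of UNIV "(*v) A"] assms
  by (auto simp: matrix_vector_mul_bounded_linear)

lemma quadratic_form_bounded_below:
  fixes H :: "real^'m::finite^'m"
  assumes "\<And>x. x \<noteq> 0 \<Longrightarrow> x \<bullet> (H *v x) > 0"
  obtains \<alpha> where "\<alpha> > 0" and "\<And>y. \<alpha> * (norm y)\<^sup>2 \<le> y \<bullet> (H *v y)"
proof -
  have cont: "continuous_on (sphere 0 1) (\<lambda>y::real^'m. y \<bullet> (H *v y))"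
    by (intro continuous_intros continuous_on_id linear_continuous_on matrix_vector_mul_bounded_linear)
  have "sphere (0::real^'m) 1 \<noteq> {}" by simp
  then obtain y0 where y0: "y0 \<in> sphere 0 1" and min: "\<forall>y\<in>sphere 0 1. y0 \<bullet> (H *v y0) \<le> y \<bullet> (H *v y)"
    using continuous_attains_inf[OF compact_sphere _ cont] by blast
  have bound: "y0 \<bullet> (H *v y0) * (norm y)\<^sup>2 \<le> y \<bullet> (H *v y)" for y
  proof (cases "y = 0")
    case False
    have "y0 \<bullet> (H *v y0) \<le> (y /\<^sub>R norm y) \<bullet> (H *v (y /\<^sub>R norm y))"
      using False by (intro min[rule_format]) simp
    also have "\<dots> = (y \<bullet> (H *v y)) / (norm y)\<^sup>2"
      by (simp add: matrix_vector_mult_scaleR power2_eq_square divide_inverse)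
    finally show ?thesis using False by (simp add: field_simps)
  qed simp
  have "y0 \<noteq> 0" using y0 by auto
  then have "y0 \<bullet> (H *v y0) > 0" using assms by blast
  with bound show thesis using that by blast
qed

lemma quad_loss_stationary:
  assumes H_sym: "transpose H = H" and min: "\<And>v. quad_loss H q c v0 \<le> quad_loss H q c v"
  shows "H *v v0 + q = 0"
proof (rule ccontr)
  define g where "g = H *v v0 + q"
  assume "H *v v0 + q \<noteq> 0"
  then have "g \<bullet> g > 0" by (simp add: g_def)
  define s where "s = (g \<bullet> g) / (\<bar>g \<bullet> (H *v g)\<bar> + 1)"
  have "s > 0" using \<open>g \<bullet> g > 0\<close> by (simp add: s_def)
  have "quad_loss H q c (v0 - s *\<^sub>R g)
      = quad_loss H q c v0 - s * (g \<bullet> (H *v v0) + g \<bullet> q) + s\<^sup>2 / 2 * (g \<bullet> (H *v g))"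
  proof -
    have "v0 \<bullet> (H *v g) = g \<bullet> (H *v v0)"
      using inner_transpose_mult[of v0 H g] by (simp add: H_sym inner_commute)
    then show ?thesis
      unfolding quad_loss_def
      by (simp add: matrix_vector_mult_diff_distrib matrix_vector_mult_scaleR inner_diff_left inner_diff_right algebra_simps power2_eq_square)
  qed
  also have "g \<bullet> (H *v v0) + g \<bullet> q = g \<bullet> g"
    by (simp add: g_def inner_add_right)
  \<comment> \<open>a short step along the negative gradient decreases the loss\<close>
  also have "s\<^sup>2 / 2 * (g \<bullet> (H *v g)) \<le> s * (g \<bullet> g) / 2"
  proof -
    have "s * (g \<bullet> (H *v g)) \<le> s * (\<bar>g \<bullet> (H *v g)\<bar> + 1)"
      using \<open>s > 0\<close> by (intro mult_left_mono) auto
    also have "\<dots> = g \<bullet> g"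
      by (simp add: s_def)
    finally have "s * (g \<bullet> (H *v g)) \<le> g \<bullet> g" .
    then show ?thesis using \<open>s > 0\<close> by (simp add: power2_eq_square mult.assoc mult_left_mono)
  qed
  finally have "quad_loss H q c (v0 - s *\<^sub>R g) < quad_loss H q c v0"
    using mult_pos_pos[OF \<open>s > 0\<close> \<open>g \<bullet> g > 0\<close>] by linarith
  then show False using min[of "v0 - s *\<^sub>R g"] by linarith
qed

section \<open>Eigenvalues of real matrices\<close>

lemma prod_linear_factors_degree_coeff:
  fixes a b :: "'i \<Rightarrow> 'a::comm_ring_1"
  assumes "finite I"
  shows "degree (\<Prod>i\<in>I. [:a i, b i:]) \<le> card I \<and> coeff (\<Prod>i\<in>I. [:a i, b i:]) (card I) = (\<Prod>i\<in>I. b i)"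
  using assms
proof (induction I rule: finite_induct)
  case empty
  then show ?case by simp
next
  case (insert x F)
  let ?Q = "\<Prod>i\<in>F. [:a i, b i:]"
  have "degree ([:a x, b x:] * ?Q) \<le> Suc (card F)"
    using degree_mult_le[of "[:a x, b x:]" ?Q] degree_pCons_le[of "a x" "[:b x:]"] insert.IH
    by (simp del: mult_pCons_left)
  moreover have "coeff ([:a x, b x:] * ?Q) (Suc (card F)) = b x * coeff ?Q (card F)"
    using insert.IH by (simp add: coeff_eq_0)
  ultimately show ?case using insert by simp
qed

definition cmat :: "real^'n::finite^'m::finite \<Rightarrow> complex^'n^'m" where
  "cmat M = (\<chi> i j. complex_of_real (M $ i $ j))"

definition charpoly :: "real^'n::finite^'n \<Rightarrow> complex poly" where
  "charpoly M = det (\<chi> i j. [:cmat M $ i $ j, - of_bool (i = j):])"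

lemma poly_charpoly: "poly (charpoly M) \<mu> = det (cmat M - mat \<mu>)"
  by (simp add: charpoly_def det_def poly_sum poly_prod mat_def of_bool_def if_distrib[of "\<lambda>x. _ * x"] cong: if_cong)

lemma charpoly_degree_coeff:
  fixes M :: "real^'n::finite^'n"
  shows "degree (charpoly M) \<le> CARD('n) \<and> coeff (charpoly M) CARD('n) = (-1) ^ CARD('n)"
proof -
  let ?F = "\<lambda>p. \<Prod>i\<in>(UNIV::'n set). [:cmat M $ i $ p i, - of_bool (i = p i):]"
  have F: "degree (?F p) \<le> CARD('n) \<and> coeff (?F p) CARD('n) = (\<Prod>i\<in>UNIV. - of_bool (i = p i))" for p
    using prod_linear_factors_degree_coeff[of "UNIV::'n set"] by simp
  have top: "(\<Prod>i\<in>(UNIV::'n set). - of_bool (i = p i) :: complex) = (if p = id then (-1) ^ CARD('n) else 0)" for p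
  proof (cases "p = id")
    case False
    then obtain i where "p i \<noteq> i" by (auto simp: fun_eq_iff)
    then show ?thesis using False by (intro trans[OF prod_zero[of UNIV]]) auto
  qed simp
  have charpoly_eq: "charpoly M = (\<Sum>p\<in>{p. p permutes (UNIV::'n set)}. of_int (sign p) * ?F p)"
    by (simp add: charpoly_def det_def)
  have "degree (charpoly M) \<le> CARD('n)"
    unfolding charpoly_eq by (rule degree_sum_le) (auto intro: order.trans[OF degree_mult_le] simp: F)
  moreover have "coeff (charpoly M) CARD('n) = (-1) ^ CARD('n)"
    unfolding charpoly_eq
    by (simp add: coeff_sum of_int_poly F top if_distrib[of "\<lambda>x. _ * x"] cong: if_cong)
  ultimately show ?thesis ..
qed

lemma is_eigenvalue_iff: "is_eigenvalue M \<mu> \<longleftrightarrow> (\<exists>v. v \<noteq> 0 \<and> cmat M *v v = \<mu> *s v)"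
  by (simp add: is_eigenvalue_def cmat_def)

lemma is_eigenvalue_iff_det: "is_eigenvalue M \<mu> \<longleftrightarrow> det (cmat M - mat \<mu>) = 0"
proof -
  have "is_eigenvalue M \<mu> \<longleftrightarrow> \<not> (\<forall>v. (cmat M - mat \<mu>) *v v = 0 \<longrightarrow> v = 0)"
    by (auto simp: is_eigenvalue_iff matrix_vector_mult_diff_rdistrib matrix_vector_mult_mat)
  also have "\<dots> \<longleftrightarrow> \<not> invertible (cmat M - mat \<mu>)"
    using matrix_left_invertible_ker invertible_left_inverse by blast
  finally show ?thesis by (simp add: invertible_det_nz)
qed

lemma charpoly_degree: "degree (charpoly M) = CARD('n)"
  for M :: "real^'n::finite^'n"
  using charpoly_degree_coeff[of M] le_degree by (metis le_antisym one_neq_zero power_eq_0_iff neg_equal_0_iff_equal)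

lemma finite_eigenvalues: "finite {\<mu>. is_eigenvalue M \<mu>}"
proof -
  have "charpoly M \<noteq> 0"
    using charpoly_degree_coeff[of M] by auto
  then show ?thesis
    using poly_roots_finite[of "charpoly M"] by (simp add: is_eigenvalue_iff_det poly_charpoly)
qed

lemma eigenvalue_exists: "\<exists>\<mu>. is_eigenvalue M \<mu>"
proof -
  have "\<not> constant (poly (charpoly M))"
    by (simp add: constant_degree charpoly_degree)
  then obtain \<mu> where "poly (charpoly M) \<mu> = 0"
    using fundamental_theorem_of_algebra by blast
  then show ?thesis by (auto simp: is_eigenvalue_iff_det poly_charpoly)
qed

lemma Min_Re_eigenvalues_pos_iff:
  "Min {Re \<mu> | \<mu>. is_eigenvalue M \<mu>} > 0 \<longleftrightarrow> (\<forall>\<mu>. is_eigenvalue M \<mu> \<longrightarrow> Re \<mu> > 0)"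
proof -
  have "{Re \<mu> | \<mu>. is_eigenvalue M \<mu>} = Re ` {\<mu>. is_eigenvalue M \<mu>}" by auto
  then show ?thesis using finite_eigenvalues[of M] eigenvalue_exists[of M] by simp
qed

lemma Min_Re_eigenvalues_neg_iff:
  "Min {Re \<mu> | \<mu>. is_eigenvalue M \<mu>} < 0 \<longleftrightarrow> (\<exists>\<mu>. is_eigenvalue M \<mu> \<and> Re \<mu> < 0)"
proof -
  have "{Re \<mu> | \<mu>. is_eigenvalue M \<mu>} = Re ` {\<mu>. is_eigenvalue M \<mu>}" by auto
  then show ?thesis using finite_eigenvalues[of M] eigenvalue_exists[of M] by (simp add: Min_less_iff)
qed

definition vec_Re :: "complex^'n::finite \<Rightarrow> real^'n" where
  "vec_Re z = (\<chi> i. Re (z $ i))"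

definition vec_Im :: "complex^'n::finite \<Rightarrow> real^'n" where
  "vec_Im z = (\<chi> i. Im (z $ i))"

lemma vec_Re_cmat_mult: "vec_Re (cmat M *v z) = M *v vec_Re z"
  by (simp add: vec_eq_iff vec_Re_def cmat_def matrix_vector_mult_def)

lemma vec_Im_cmat_mult: "vec_Im (cmat M *v z) = M *v vec_Im z"
  by (simp add: vec_eq_iff vec_Im_def cmat_def matrix_vector_mult_def)

lemma vec_Re_scale: "vec_Re (\<mu> *s z) = Re \<mu> *\<^sub>R vec_Re z - Im \<mu> *\<^sub>R vec_Im z"
  by (simp add: vec_eq_iff vec_Re_def vec_Im_def)

lemma vec_Im_scale: "vec_Im (\<mu> *s z) = Im \<mu> *\<^sub>R vec_Re z + Re \<mu> *\<^sub>R vec_Im z"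
  by (simp add: vec_eq_iff vec_Re_def vec_Im_def)

lemma vec_Re_Im_eq_0_iff: "vec_Re z = 0 \<and> vec_Im z = 0 \<longleftrightarrow> z = 0"
  by (auto simp: vec_eq_iff vec_Re_def vec_Im_def complex_eq_iff)

lemma eigenvalue_Re_pos:
  fixes M K :: "real^'n::finite^'n"
  assumes K_sym: "\<And>x y. x \<bullet> (K *v y) = y \<bullet> (K *v x)"
    and K_pos: "\<And>x. x \<noteq> 0 \<Longrightarrow> x \<bullet> (K *v x) > 0"
    and KM_pos: "\<And>x. x \<noteq> 0 \<Longrightarrow> x \<bullet> (K *v (M *v x)) > 0"
    and "is_eigenvalue M \<mu>"
  shows "Re \<mu> > 0"
proof -
  obtain v where "v \<noteq> 0" and v: "cmat M *v v = \<mu> *s v"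
    using \<open>is_eigenvalue M \<mu>\<close> by (auto simp: is_eigenvalue_iff)
  define a b where "a = vec_Re v" and "b = vec_Im v"
  have ab: "a \<noteq> 0 \<or> b \<noteq> 0"
    using \<open>v \<noteq> 0\<close> vec_Re_Im_eq_0_iff[of v] by (auto simp: a_def b_def)
  have Ma: "M *v a = Re \<mu> *\<^sub>R a - Im \<mu> *\<^sub>R b"
    using arg_cong[OF v, of vec_Re] by (simp add: a_def b_def vec_Re_cmat_mult vec_Re_scale)
  have Mb: "M *v b = Im \<mu> *\<^sub>R a + Re \<mu> *\<^sub>R b"
    using arg_cong[OF v, of vec_Im] by (simp add: a_def b_def vec_Im_cmat_mult vec_Im_scale)
  have nonneg: "x \<bullet> (K *v x) \<ge> 0" "x \<bullet> (K *v (M *v x)) \<ge> 0" for x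
    using K_pos[of x] KM_pos[of x] by (cases "x = 0"; simp)+
  have K_ab: "a \<bullet> (K *v a) + b \<bullet> (K *v b) > 0"
    using ab K_pos nonneg by (meson add_pos_nonneg add_nonneg_pos)
  have "a \<bullet> (K *v (M *v a)) + b \<bullet> (K *v (M *v b)) > 0"
    using ab KM_pos nonneg by (meson add_pos_nonneg add_nonneg_pos)
  \<comment> \<open>the rotational part cancels because K is symmetric\<close>
  also have "a \<bullet> (K *v (M *v a)) + b \<bullet> (K *v (M *v b)) = Re \<mu> * (a \<bullet> (K *v a) + b \<bullet> (K *v b))"
    using K_sym[of b a] unfolding Ma Mb
    by (simp add: algebra_simps)
  finally show ?thesis using K_ab by (simp add: zero_less_mult_iff)
qed

lemma eigenvector_with_Re_component:
  assumes "is_eigenvalue M \<mu>"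
  obtains v j where "cmat M *v v = \<mu> *s v" and "Re (v $ j) \<noteq> 0"
proof -
  obtain v where "v \<noteq> 0" and v: "cmat M *v v = \<mu> *s v"
    using assms by (auto simp: is_eigenvalue_iff)
  then obtain j where "v $ j \<noteq> 0" by (auto simp: vec_eq_iff)
  show thesis
  proof (cases "Re (v $ j) = 0")
    case True
    have "cmat M *v (\<i> *s v) = \<mu> *s (\<i> *s v)"
      by (simp add: matrix_vector_mult_scalar_commute v mult.left_commute)
    moreover have "Re ((\<i> *s v) $ j) \<noteq> 0"
      using True \<open>v $ j \<noteq> 0\<close> by (simp add: complex_eq_iff)
    ultimately show thesis by (rule that)
  qed (use v that in blast)
qed

definition richardson_iter :: "real^'n::finite^'n \<Rightarrow> real \<Rightarrow> nat \<Rightarrow> real^'n \<Rightarrow> real^'n" where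
  "richardson_iter M \<eta> t = (\<lambda>y. y - \<eta> *\<^sub>R (M *v y)) ^^ t"

lemma richardson_iter_0 [simp]: "richardson_iter M \<eta> 0 e = e"
  by (simp add: richardson_iter_def)

lemma richardson_iter_Suc:
  "richardson_iter M \<eta> (Suc t) e = richardson_iter M \<eta> t e - \<eta> *\<^sub>R (M *v richardson_iter M \<eta> t e)"
  by (simp add: richardson_iter_def)

lemma richardson_iter_vec_Re_eigenvector:
  assumes "cmat M *v v = \<mu> *s v"
  shows "richardson_iter M \<eta> t (vec_Re v) = vec_Re ((1 - of_real \<eta> * \<mu>) ^ t *s v)"
proof (induction t)
  case (Suc t)
  let ?w = "(1 - of_real \<eta> * \<mu>) ^ t"
  have Mw: "M *v vec_Re (?w *s v) = vec_Re ((?w * \<mu>) *s v)"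
    by (simp add: vec_Re_cmat_mult[symmetric] matrix_vector_mult_scalar_commute assms mult.commute)
  show ?case
    unfolding richardson_iter_Suc Suc Mw by (simp add: vec_eq_iff vec_Re_def algebra_simps)
qed simp

lemma Re_power_mult_not_tendsto_0:
  fixes \<omega> c :: complex
  assumes "1 \<le> norm \<omega>" and "Re c \<noteq> 0"
  shows "\<not> (\<lambda>t. Re (\<omega> ^ t * c)) \<longlonglongrightarrow> 0"
proof
  assume Re_lim: "(\<lambda>t. Re (\<omega> ^ t * c)) \<longlonglongrightarrow> 0"
  show False
  proof (cases "Im \<omega> = 0")
    case True
    then obtain r where r: "\<omega> = of_real r" by (metis complex_is_Real_iff Reals_cases)
    have "\<bar>Re c\<bar> \<le> \<bar>Re (\<omega> ^ t * c)\<bar>" for t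
      using assms(1) by (simp add: r abs_mult power_abs mult_le_cancel_right1)
    moreover have "(\<lambda>t. \<bar>Re (\<omega> ^ t * c)\<bar>) \<longlonglongrightarrow> 0"
      using tendsto_rabs[OF Re_lim] by simp
    ultimately have "\<bar>Re c\<bar> \<le> 0" by (intro LIMSEQ_le_const) auto
    then show False using assms(2) by simp
  next
    case False
    \<comment> \<open>the imaginary parts are recovered from two consecutive real parts\<close>
    have "Im (\<omega> ^ t * c) = (Re \<omega> * Re (\<omega> ^ t * c) - Re (\<omega> ^ Suc t * c)) / Im \<omega>" for t
      using False by (simp add: field_simps)
    moreover have "(\<lambda>t. (Re \<omega> * Re (\<omega> ^ t * c) - Re (\<omega> ^ Suc t * c)) / Im \<omega>) \<longlonglongrightarrow> 0"
      using tendsto_diff[OF tendsto_mult_right_zero[OF Re_lim] LIMSEQ_Suc[OF Re_lim]]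
      by (auto intro: tendsto_divide_zero)
    ultimately have "(\<lambda>t. \<omega> ^ t * c) \<longlonglongrightarrow> 0"
      using Re_lim by (simp add: tendsto_complex_iff)
    then have "(\<lambda>t. norm (\<omega> ^ t * c)) \<longlonglongrightarrow> 0"
      by (simp add: tendsto_norm_zero_iff)
    moreover have "norm c \<le> norm (\<omega> ^ t * c)" for t
      using assms(1) by (simp add: norm_mult norm_power mult_le_cancel_right1)
    ultimately have "norm c \<le> 0" by (intro LIMSEQ_le_const) auto
    then show False using assms(2) by simp
  qed
qed

section \<open>Regularized pseudoinverses and random batches\<close>

lemma invertible_gram_plus_mat:
  fixes A :: "real^'n::finite^'m::finite"
  assumes "lam > 0"
  shows "invertible (transpose A ** A + mat lam)"
proof (rule invertible_if_ker_trivial)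
  fix x assume "(transpose A ** A + mat lam) *v x = 0"
  then have "x \<bullet> ((transpose A ** A + mat lam) *v x) = 0" by simp
  then have "(A *v x) \<bullet> (A *v x) + lam * (x \<bullet> x) = 0"
    by (simp add: matrix_vector_mult_add_rdistrib matrix_vector_mult_mat scalar_mult_eq_scaleR
        inner_add_right inner_gram_mult)
  moreover have "lam * (x \<bullet> x) \<ge> 0" using assms by simp
  ultimately have "lam * (x \<bullet> x) = 0" by (simp add: add_nonneg_eq_0_iff)
  then show "x = 0" using assms by simp
qed

lemma reg_pinv_mult_self:
  fixes A :: "real^'n::finite^'m::finite"
  assumes "lam > 0"
  shows "(transpose A ** A) *v ((reg_pinv lam A ** A) *v u) + lam *\<^sub>R ((reg_pinv lam A ** A) *v u)
    = (transpose A ** A) *v u"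
proof -
  let ?G = "transpose A ** A"
  have "(?G + mat lam) ** (reg_pinv lam A ** A) = ((?G + mat lam) ** matrix_inv (?G + mat lam)) ** ?G"
    using assms by (simp add: reg_pinv_def matrix_mul_assoc)
  also have "\<dots> = ?G"
    by (simp add: matrix_inv_mult(1)[OF invertible_gram_plus_mat[OF assms, of A]])
  finally have "(?G + mat lam) *v ((reg_pinv lam A ** A) *v u) = ?G *v u"
    by (simp add: matrix_vector_mul_assoc)
  then show ?thesis
    by (simp add: matrix_vector_mult_add_rdistrib matrix_vector_mult_mat scalar_mult_eq_scaleR)
qed

lemma norm_reg_pinv_mult_self_le:
  fixes A :: "real^'n::finite^'m::finite"
  assumes "lam > 0"
  shows "lam * norm ((reg_pinv lam A ** A) *v u) \<le> norm ((transpose A ** A) *v u)"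
proof -
  define y where "y = (reg_pinv lam A ** A) *v u"
  have "y \<bullet> ((transpose A ** A) *v u) = (A *v y) \<bullet> (A *v y) + lam * (y \<bullet> y)"
    using arg_cong[OF reg_pinv_mult_self[OF assms, of A u], of "inner y"]
    by (simp add: y_def inner_add_right inner_gram_mult)
  then have "lam * (norm y)\<^sup>2 \<le> y \<bullet> ((transpose A ** A) *v u)"
    by (simp add: power2_norm_eq_inner)
  also have "\<dots> \<le> norm y * norm ((transpose A ** A) *v u)"
    by (rule norm_cauchy_schwarz)
  finally have "norm y * (lam * norm y) \<le> norm y * norm ((transpose A ** A) *v u)"
    by (simp add: power2_eq_square algebra_simps)
  then show ?thesis
    unfolding y_def[symmetric] using assms by (cases "y = 0") auto
qed

lemma reg_pinv_mult_self_approx: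
  fixes A :: "real^'n::finite^'m::finite"
  assumes "lam > 0" and "C \<ge> 0" and G_bound: "\<And>v. norm ((transpose A ** A) *v v) \<le> C * norm v"
  shows "norm (lam *\<^sub>R ((reg_pinv lam A ** A) *v u) - (transpose A ** A) *v u) \<le> C\<^sup>2 / lam * norm u"
proof -
  let ?y = "(reg_pinv lam A ** A) *v u"
  have "(transpose A ** A) *v u - lam *\<^sub>R ?y = (transpose A ** A) *v ?y"
    using reg_pinv_mult_self[OF assms(1), of A u] by (metis add_diff_cancel_right')
  then have "norm (lam *\<^sub>R ?y - (transpose A ** A) *v u) = norm ((transpose A ** A) *v ?y)"
    by (simp add: norm_minus_commute)
  also have "\<dots> \<le> C * norm ?y" by (rule G_bound)
  also have "\<dots> \<le> C * (C * norm u / lam)"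
    using norm_reg_pinv_mult_self_le[OF assms(1), of A u] G_bound[of u] assms(1) \<open>C \<ge> 0\<close>
    by (intro mult_left_mono) (simp_all add: field_simps)
  finally show ?thesis by (simp add: power2_eq_square)
qed

lemma rowsel_mult_vec_nth: "(rowsel S *v z) $ i = (if i \<in> S then z $ i else 0)"
  by (simp add: rowsel_def matrix_vector_mult_def if_distrib[of "\<lambda>a. a * _"] cong: if_cong)

lemma norm_rowsel_mult_le: "norm (rowsel S *v z) \<le> norm z"
  by (rule norm_le_componentwise_cart) (simp add: rowsel_mult_vec_nth)

lemma gram_rowsel_mult:
  "(transpose (rowsel S ** J) ** (rowsel S ** J)) *v v = transpose J *v (rowsel S *v (J *v v))"
proof -
  have "transpose (rowsel S) = rowsel S"
    by (simp add: rowsel_def transpose_def vec_eq_iff)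
  moreover have "rowsel S *v (rowsel S *v w) = rowsel S *v w" for w
    by (simp add: vec_eq_iff rowsel_mult_vec_nth)
  ultimately show ?thesis
    by (simp add: matrix_transpose_mul matrix_vector_mul_assoc[symmetric] del: transpose_matrix_vector)
qed

lemma batches_nonempty: "k \<le> CARD('m::finite) \<Longrightarrow> batches k \<noteq> ({} :: 'm set set)"
  using obtain_subset_with_card_n[of k "UNIV :: 'm set"] by (auto simp: batches_def)

lemma card_batches_containing:
  assumes "1 \<le> k" "k \<le> CARD('m::finite)"
  shows "card {S \<in> batches k. (i::'m) \<in> S} = (CARD('m) - 1) choose (k - 1)"
proof -
  have "bij_betw (\<lambda>S. S - {i}) {S \<in> batches k. i \<in> S} {T. T \<subseteq> UNIV - {i} \<and> card T = k - 1}"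
  proof (rule bij_betw_byWitness[where f' = "insert i"])
    show "(\<lambda>S. S - {i}) ` {S \<in> batches k. i \<in> S} \<subseteq> {T. T \<subseteq> UNIV - {i} \<and> card T = k - 1}"
      by (auto simp: batches_def)
    show "insert i ` {T. T \<subseteq> UNIV - {i} \<and> card T = k - 1} \<subseteq> {S \<in> batches k. i \<in> S}"
      using assms by (auto simp: batches_def card_insert_if subset_Diff_insert)
  qed auto
  then have "card {S \<in> batches k. i \<in> S} = card {T. T \<subseteq> UNIV - {i} \<and> card T = k - 1}"
    by (rule bij_betw_same_card)
  also have "\<dots> = (CARD('m) - 1) choose (k - 1)"
    by (subst n_subsets) (simp_all add: card_Diff_singleton)
  finally show ?thesis .
qed

lemma sum_rowsel_batches:
  assumes "1 \<le> k" "k \<le> CARD('m::finite)"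
  shows "(\<Sum>S\<in>batches k. rowsel S *v z) = real ((CARD('m) - 1) choose (k - 1)) *\<^sub>R (z::real^'m)"
proof -
  have "(\<Sum>S\<in>batches k. (rowsel S *v z) $ i) = real ((CARD('m) - 1) choose (k - 1)) * z $ i" for i :: 'm
  proof -
    have "(\<Sum>S\<in>batches k. (rowsel S *v z) $ i) = (\<Sum>S\<in>{S \<in> batches k. i \<in> S}. z $ i)"
      by (simp add: rowsel_mult_vec_nth sum.inter_filter[symmetric])
    then show ?thesis
      using card_batches_containing[OF assms, of i] by simp
  qed
  then show ?thesis by (simp add: vec_eq_iff sum_component)
qed

section \<open>Iterations with uniformly random batches\<close>

lemma expectation_bind_uniform:
  fixes p :: "'a pmf" and f :: "'b \<Rightarrow> real"
  assumes "finite (set_pmf p)" "finite X" "X \<noteq> {}"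
  shows "measure_pmf.expectation (bind_pmf p (\<lambda>x. map_pmf (g x) (pmf_of_set X))) f =
    measure_pmf.expectation p (\<lambda>x. (\<Sum>S\<in>X. f (g x S)) / card X)"
proof -
  have "measure_pmf.expectation (bind_pmf p (\<lambda>x. map_pmf (g x) (pmf_of_set X))) f =
     (\<Sum>a\<in>set_pmf p. pmf p a *\<^sub>R measure_pmf.expectation (map_pmf (g a) (pmf_of_set X)) f)"
    by (rule pmf_expectation_bind) (use assms in auto)
  also have "\<dots> = (\<Sum>a\<in>set_pmf p. pmf p a *\<^sub>R ((\<Sum>S\<in>X. f (g a S)) / card X))"
    using assms by (simp add: integral_pmf_of_set)
  also have "\<dots> = measure_pmf.expectation p (\<lambda>x. (\<Sum>S\<in>X. f (g x S)) / card X)"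
    by (rule integral_measure_pmf[symmetric]) (use assms in auto)
  finally show ?thesis .
qed

lemma finite_set_pmf_iterate_uniform:
  assumes step: "\<And>t. p (Suc t) = bind_pmf (p t) (\<lambda>x. map_pmf (g x) (pmf_of_set X))"
    and "finite X" "X \<noteq> {}" "finite (set_pmf (p 0))"
  shows "finite (set_pmf (p t))"
  by (induction t) (use assms in auto)

lemma expectation_iterate_uniform_le_power:
  fixes p :: "nat \<Rightarrow> 'a pmf" and V :: "'a \<Rightarrow> real"
  assumes step: "\<And>t. p (Suc t) = bind_pmf (p t) (\<lambda>x. map_pmf (g x) (pmf_of_set X))"
    and X: "finite X" "X \<noteq> {}" and p0: "finite (set_pmf (p 0))"
    and "\<rho> \<ge> 0" and contract: "\<And>x. (\<Sum>S\<in>X. V (g x S)) / card X \<le> \<rho> * V x"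
  shows "measure_pmf.expectation (p t) V \<le> \<rho> ^ t * measure_pmf.expectation (p 0) V"
proof (induction t)
  case (Suc t)
  have fin: "finite (set_pmf (p t))"
    using finite_set_pmf_iterate_uniform[OF step X p0] .
  have "measure_pmf.expectation (p (Suc t)) V = measure_pmf.expectation (p t) (\<lambda>x. (\<Sum>S\<in>X. V (g x S)) / card X)"
    unfolding step using fin X by (rule expectation_bind_uniform)
  also have "\<dots> \<le> measure_pmf.expectation (p t) (\<lambda>x. \<rho> * V x)"
    using fin by (intro integral_mono contract integrable_measure_pmf_finite)
  also have "\<dots> \<le> \<rho> * (\<rho> ^ t * measure_pmf.expectation (p 0) V)"
    using Suc \<open>\<rho> \<ge> 0\<close> by (simp add: mult_left_mono)
  finally show ?case by simp
qed simp

lemma quadratic_lyapunov_avg_step: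
  fixes K :: "real^'n::finite^'n" and Z :: "'s \<Rightarrow> real^'n^'n"
  assumes X: "finite X" "X \<noteq> {}"
    and K_sym: "\<And>x y. x \<bullet> (K *v y) = y \<bullet> (K *v x)"
    and K_upper: "\<And>x. x \<bullet> (K *v x) \<le> CK * (norm x)\<^sup>2" and "CK > 0"
    and drift: "\<beta> * (norm e)\<^sup>2 \<le> (\<Sum>S\<in>X. e \<bullet> (K *v (Z S *v e))) / card X"
    and Z_bound: "\<And>S. S \<in> X \<Longrightarrow> (Z S *v e) \<bullet> (K *v (Z S *v e)) \<le> D * (norm e)\<^sup>2"
    and "\<beta> \<ge> 0" "\<eta> > 0" "\<eta> * D \<le> \<beta>"
  shows "(\<Sum>S\<in>X. (e - \<eta> *\<^sub>R (Z S *v e)) \<bullet> (K *v (e - \<eta> *\<^sub>R (Z S *v e)))) / card X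
    \<le> (1 - \<eta> * \<beta> / CK) * (e \<bullet> (K *v e))"
proof -
  let ?V = "\<lambda>x. x \<bullet> (K *v x)"
  let ?avg = "\<lambda>f. (\<Sum>S\<in>X. f S) / real (card X)"
  have "card X > 0" using X by (simp add: card_gt_0_iff)
  have expand: "?V (e - \<eta> *\<^sub>R z) = ?V e - 2 * \<eta> * (e \<bullet> (K *v z)) + \<eta>\<^sup>2 * ?V z" for z
    using K_sym[of z e]
    by (simp add: matrix_vector_mult_diff_distrib matrix_vector_mult_scaleR inner_diff_left inner_diff_right
        algebra_simps power2_eq_square)
  have "?avg (\<lambda>S. ?V (e - \<eta> *\<^sub>R (Z S *v e)))
      = ?V e - 2 * \<eta> * ?avg (\<lambda>S. e \<bullet> (K *v (Z S *v e))) + \<eta>\<^sup>2 * ?avg (\<lambda>S. ?V (Z S *v e))"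
    using \<open>card X > 0\<close> unfolding expand
    by (simp add: sum.distrib sum_subtractf sum_distrib_left[symmetric] add_divide_distrib diff_divide_distrib)
  also have "\<dots> \<le> ?V e - 2 * \<eta> * (\<beta> * (norm e)\<^sup>2) + \<eta>\<^sup>2 * (D * (norm e)\<^sup>2)"
  proof -
    have "?avg (\<lambda>S. ?V (Z S *v e)) \<le> ?avg (\<lambda>S. D * (norm e)\<^sup>2)"
      using \<open>card X > 0\<close> Z_bound by (intro divide_right_mono sum_mono) auto
    then have "?avg (\<lambda>S. ?V (Z S *v e)) \<le> D * (norm e)\<^sup>2"
      using \<open>card X > 0\<close> by simp
    then show ?thesis
      using drift \<open>\<eta> > 0\<close> by (smt (verit) mult_left_mono zero_le_power2)
  qed
  also have "\<dots> \<le> ?V e - \<eta> * \<beta> * (norm e)\<^sup>2"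
  proof -
    have "\<eta> * (\<eta> * D) * (norm e)\<^sup>2 \<le> \<eta> * \<beta> * (norm e)\<^sup>2"
      using \<open>\<eta> * D \<le> \<beta>\<close> \<open>\<eta> > 0\<close> by (intro mult_right_mono mult_left_mono) auto
    then show ?thesis by (simp add: power2_eq_square mult_ac)
  qed
  also have "\<dots> \<le> (1 - \<eta> * \<beta> / CK) * ?V e"
  proof -
    have "\<eta> * \<beta> / CK * ?V e \<le> \<eta> * \<beta> / CK * (CK * (norm e)\<^sup>2)"
      using K_upper \<open>\<beta> \<ge> 0\<close> \<open>\<eta> > 0\<close> \<open>CK > 0\<close> by (intro mult_left_mono) auto
    then show ?thesis using \<open>CK > 0\<close> by (simp add: algebra_simps)
  qed
  finally show ?thesis .
qed

section \<open>The SNGD iteration\<close>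

locale sngd_problem =
  fixes J :: "real^'n::finite^'m::finite" and H :: "real^'m^'m"
    and q :: "real^'m" and \<theta>s :: "real^'n" and k :: nat
  assumes full_rank: "rank J = CARD('n)"
    and H_sym: "transpose H = H"
    and H_pos: "\<And>x. x \<noteq> 0 \<Longrightarrow> x \<bullet> (H *v x) > 0"
    and stationary: "H *v (J *v \<theta>s) + q = 0"
    and range_incl: "range (\<lambda>x. (H ** J) *v x) \<subseteq> range (\<lambda>x. J *v x)"
    and k_pos: "1 \<le> k" and k_le: "k \<le> CARD('m)"
begin

lemma J_inj: "J *v x = 0 \<Longrightarrow> x = 0"
  using full_rank full_rank_injective[of J] by (metis injD matrix_vector_mult_0_right)

definition G :: "real^'n^'n" where "G = transpose J ** J"

definition B :: "real^'n^'n" where "B = Jplus J ** H ** J"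

definition K :: "real^'n^'n" where "K = transpose J ** H ** J"

lemma invertible_G: "invertible G"
proof (rule invertible_if_ker_trivial)
  fix x assume "G *v x = 0"
  then have "(J *v x) \<bullet> (J *v x) = 0"
    using inner_gram_mult[of x J] by (simp add: G_def)
  then show "x = 0" using J_inj by simp
qed

lemma Jplus_mult_J: "Jplus J ** J = mat 1"
  using matrix_inv_mult(2)[OF invertible_G] by (simp add: Jplus_def G_def matrix_mul_assoc)

text \<open>Range inclusion lets the output-space operator \<open>H J\<close> be pulled back to parameter space.\<close>

lemma J_mult_B: "J ** B = H ** J"
proof -
  have "(J ** B) *v x = (H ** J) *v x" for x
  proof -
    obtain y where y: "(H ** J) *v x = J *v y" using range_incl by blast
    have "B *v x = Jplus J *v ((H ** J) *v x)"
      by (simp add: B_def matrix_vector_mul_assoc matrix_mul_assoc)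
    also have "\<dots> = y"
      by (simp add: y matrix_vector_mul_assoc Jplus_mult_J)
    finally show ?thesis by (metis y matrix_vector_mul_assoc)
  qed
  then show ?thesis by (simp add: matrix_eq)
qed

lemma sngd_step_err:
  "sngd_step lam eta J H q S \<theta> - \<theta>s = (\<theta> - \<theta>s) - eta *\<^sub>R (Pmat lam J S *v (B *v (\<theta> - \<theta>s)))"
proof -
  have "(H ** J) *v \<theta> + q = (H ** J) *v (\<theta> - \<theta>s)"
    using stationary by (simp add: matrix_vector_mult_diff_distrib matrix_vector_mul_assoc algebra_simps)
  also have "\<dots> = J *v (B *v (\<theta> - \<theta>s))"
    by (simp add: J_mult_B matrix_vector_mul_assoc)
  finally show ?thesis
    by (simp add: sngd_step_def Pmat_def matrix_vector_mul_assoc matrix_mul_assoc)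
qed

lemma card_batches_pos: "card (batches k :: 'm set set) > 0"
  using batches_nonempty[OF k_le] by (simp add: card_gt_0_iff)

lemma finite_set_sngd_pmf: "finite (set_pmf (sngd_pmf lam eta J H q k \<theta>0 t))"
  by (rule finite_set_pmf_iterate_uniform) (use batches_nonempty[OF k_le] in auto)

lemma expectation_sngd_pmf_Suc:
  "measure_pmf.expectation (sngd_pmf lam eta J H q k \<theta>0 (Suc t)) f =
   measure_pmf.expectation (sngd_pmf lam eta J H q k \<theta>0 t)
     (\<lambda>\<theta>. (\<Sum>S\<in>batches k. f (sngd_step lam eta J H q S \<theta>)) / card (batches k :: 'm set set))"
  using finite_set_sngd_pmf batches_nonempty[OF k_le] by (simp add: expectation_bind_uniform)

lemma Mmat_eq: "Mmat lam J H k = Pbar lam J k ** B"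
  by (simp add: Mmat_def B_def matrix_mul_assoc)

lemma Mmat_mult:
  "Mmat lam J H k *v e = (\<Sum>S\<in>batches k. Pmat lam J S *v (B *v e)) /\<^sub>R card (batches k :: 'm set set)"
  by (simp add: Mmat_eq Pbar_def matrix_vector_mul_assoc[symmetric] scaleR_matrix_vector_assoc[symmetric]
        sum_matrix_vector_mult inverse_eq_divide)

lemma inner_K_mult: "x \<bullet> (K *v y) = (J *v x) \<bullet> (H *v (J *v y))"
  by (simp add: K_def inner_transpose_mult matrix_vector_mul_assoc[symmetric] del: transpose_matrix_vector)

lemma K_sym: "x \<bullet> (K *v y) = y \<bullet> (K *v x)"
  by (metis inner_K_mult H_sym inner_commute inner_transpose_mult)

lemma K_pos: "x \<noteq> 0 \<Longrightarrow> x \<bullet> (K *v x) > 0"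
  using inner_K_mult H_pos J_inj by metis

lemma K_eq: "K = G ** B"
proof -
  have "G ** B = transpose J ** (J ** B)" by (simp add: G_def matrix_mul_assoc)
  then show ?thesis by (simp add: J_mult_B K_def matrix_mul_assoc)
qed

lemma K_bounded_below: obtains \<alpha> where "\<alpha> > 0" and "\<And>x. \<alpha> * (norm x)\<^sup>2 \<le> x \<bullet> (K *v x)"
  using quadratic_form_bounded_below[OF K_pos] by blast

lemma K_bounded_above: obtains CK where "CK > 0" and "\<And>x. x \<bullet> (K *v x) \<le> CK * (norm x)\<^sup>2"
proof -
  obtain C where "C \<ge> 0" and C: "\<And>x. norm (K *v x) \<le> C * norm x"
    using matrix_vector_mult_bounded[of K] by blast
  have "x \<bullet> (K *v x) \<le> (C + 1) * (norm x)\<^sup>2" for x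
  proof -
    have "x \<bullet> (K *v x) \<le> norm x * norm (K *v x)" by (rule norm_cauchy_schwarz)
    also have "\<dots> \<le> norm x * (C * norm x)" using C by (simp add: mult_left_mono)
    also have "\<dots> \<le> (C + 1) * (norm x)\<^sup>2" by (simp add: power2_eq_square algebra_simps)
    finally show ?thesis .
  qed
  then show thesis using that \<open>C \<ge> 0\<close> by (metis add_nonneg_pos zero_less_one)
qed

lemma B_inj: "B *v x = 0 \<Longrightarrow> x = 0"
proof -
  assume "B *v x = 0"
  then have "H *v (J *v x) = 0" by (metis J_mult_B matrix_vector_mul_assoc matrix_vector_mult_0_right)
  then have "J *v x = 0" using H_pos by fastforce
  then show "x = 0" by (rule J_inj)
qed

lemma G_inj: "G *v x = 0 \<Longrightarrow> x = 0"
  using invertible_G by (metis matrix_left_invertible_ker invertible_def)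

lemma batch_gram_bounded:
  obtains C where "C \<ge> 0"
    and "\<And>S v. norm ((transpose (rowsel S ** J) ** (rowsel S ** J)) *v v) \<le> C * norm v"
proof -
  obtain C1 where "C1 \<ge> 0" and C1: "\<And>y. norm (transpose J *v y) \<le> C1 * norm y"
    using matrix_vector_mult_bounded[of "transpose J"] by blast
  obtain C2 where "C2 \<ge> 0" and C2: "\<And>x. norm (J *v x) \<le> C2 * norm x"
    using matrix_vector_mult_bounded[of J] by blast
  have "norm (transpose J *v (rowsel S *v (J *v v))) \<le> C1 * C2 * norm v" for S v
  proof -
    have "norm (transpose J *v (rowsel S *v (J *v v))) \<le> C1 * norm (rowsel S *v (J *v v))"
      by (rule C1)
    also have "\<dots> \<le> C1 * norm (J *v v)"
      using norm_rowsel_mult_le \<open>C1 \<ge> 0\<close> by (rule mult_left_mono)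
    also have "\<dots> \<le> C1 * (C2 * norm v)"
      using C2 \<open>C1 \<ge> 0\<close> by (rule mult_left_mono)
    finally show ?thesis by simp
  qed
  then show thesis
    using that[of "C1 * C2"] \<open>C1 \<ge> 0\<close> \<open>C2 \<ge> 0\<close> by (simp add: gram_rowsel_mult del: transpose_matrix_vector)
qed

definition row_prob :: real where \<comment> \<open>equals \<open>k / CARD('m)\<close>\<close>
  "row_prob = real ((CARD('m) - 1) choose (k - 1)) / real (card (batches k :: 'm set set))"

lemma row_prob_pos: "row_prob > 0"
  using k_pos k_le card_batches_pos by (simp add: row_prob_def zero_less_binomial_iff)

lemma sum_batch_gram:
  "(\<Sum>S\<in>batches k. (transpose (rowsel S ** J) ** (rowsel S ** J)) *v v)
    = real ((CARD('m) - 1) choose (k - 1)) *\<^sub>R (G *v v)"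
proof -
  have "(\<Sum>S\<in>batches k. (transpose (rowsel S ** J) ** (rowsel S ** J)) *v v)
      = transpose J *v (\<Sum>S\<in>batches k. rowsel S *v (J *v v))"
    by (simp only: gram_rowsel_mult matrix_vector_mult_sum)
  also have "\<dots> = real ((CARD('m) - 1) choose (k - 1)) *\<^sub>R (transpose J *v (J *v v))"
    by (simp add: sum_rowsel_batches[OF k_pos k_le] matrix_vector_mult_scaleR del: transpose_matrix_vector)
  finally show ?thesis
    by (simp add: G_def matrix_vector_mul_assoc del: transpose_matrix_vector)
qed

lemma Pbar_approx:
  assumes "lam > 0" and "C \<ge> 0"
    and C: "\<And>S v. norm ((transpose (rowsel S ** J) ** (rowsel S ** J)) *v v) \<le> C * norm v"
  shows "norm (lam *\<^sub>R (Pbar lam J k *v u) - row_prob *\<^sub>R (G *v u)) \<le> C\<^sup>2 / lam * norm u"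
proof -
  let ?N = "real (card (batches k :: 'm set set))"
  let ?A = "\<lambda>S. rowsel S ** J"
  have "lam *\<^sub>R (Pbar lam J k *v u) - row_prob *\<^sub>R (G *v u)
      = (\<Sum>S\<in>batches k. lam *\<^sub>R (Pmat lam J S *v u) - (transpose (?A S) ** ?A S) *v u) /\<^sub>R ?N"
    using card_batches_pos
    by (simp add: Pbar_def row_prob_def sum_subtractf sum_batch_gram scaleR_matrix_vector_assoc[symmetric]
        sum_matrix_vector_mult scaleR_sum_right[symmetric] algebra_simps divide_inverse mult.commute
        del: transpose_matrix_vector)
  also have "norm \<dots> = norm (\<Sum>S\<in>batches k. lam *\<^sub>R (Pmat lam J S *v u) - (transpose (?A S) ** ?A S) *v u) / ?N"
    by (simp add: divide_inverse_commute)
  also have "\<dots> \<le> (\<Sum>S\<in>(batches k :: 'm set set). C\<^sup>2 / lam * norm u) / ?N"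
  proof (rule divide_right_mono)
    show "norm (\<Sum>S\<in>batches k. lam *\<^sub>R (Pmat lam J S *v u) - (transpose (?A S) ** ?A S) *v u)
        \<le> (\<Sum>S\<in>(batches k :: 'm set set). C\<^sup>2 / lam * norm u)"
      unfolding Pmat_def
      by (rule order.trans[OF norm_sum sum_mono]) (rule reg_pinv_mult_self_approx[OF assms(1,2) C])
  qed simp
  also have "\<dots> = C\<^sup>2 / lam * norm u"
    using card_batches_pos batches_nonempty[OF k_le] by simp
  finally show ?thesis .
qed

lemma Pbar_coercive:
  obtains lam0 \<gamma> where "lam0 \<ge> 0" and "\<gamma> > 0"
    and "\<And>lam u. lam > lam0 \<Longrightarrow> \<gamma> / lam * (norm u)\<^sup>2 \<le> (G *v u) \<bullet> (Pbar lam J k *v u)"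
proof -
  obtain C where "C \<ge> 0"
    and C: "\<And>S v. norm ((transpose (rowsel S ** J) ** (rowsel S ** J)) *v v) \<le> C * norm v"
    using batch_gram_bounded by blast
  obtain CG where "CG \<ge> 0" and CG: "\<And>x. norm (G *v x) \<le> CG * norm x"
    using matrix_vector_mult_bounded[of G] by blast
  obtain g where "g > 0" and g: "\<And>x. g * norm x \<le> norm (G *v x)"
    using matrix_vector_mult_bounded_below[OF G_inj] by blast
  define \<gamma> where "\<gamma> = row_prob * g\<^sup>2 / 2"
  define lam0 where "lam0 = CG * C\<^sup>2 / \<gamma>"
  have "\<gamma> > 0" using row_prob_pos \<open>g > 0\<close> by (simp add: \<gamma>_def)
  have "lam0 \<ge> 0" using \<open>CG \<ge> 0\<close> \<open>\<gamma> > 0\<close> by (simp add: lam0_def)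
  have "\<gamma> / lam * (norm u)\<^sup>2 \<le> (G *v u) \<bullet> (Pbar lam J k *v u)" if "lam > lam0" for lam u
  proof -
    have "lam > 0" using that \<open>lam0 \<ge> 0\<close> by simp
    define d where "d = lam *\<^sub>R (Pbar lam J k *v u) - row_prob *\<^sub>R (G *v u)"
    have "CG * C\<^sup>2 / lam \<le> \<gamma>"
      using that \<open>\<gamma> > 0\<close> \<open>lam > 0\<close> by (simp add: lam0_def field_simps)
    have "(G *v u) \<bullet> d \<ge> - (CG * C\<^sup>2 / lam * (norm u)\<^sup>2)"
    proof -
      have "\<bar>(G *v u) \<bullet> d\<bar> \<le> norm (G *v u) * norm d" by (rule Cauchy_Schwarz_ineq2)
      also have "\<dots> \<le> (CG * norm u) * (C\<^sup>2 / lam * norm u)"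
        using CG Pbar_approx[OF \<open>lam > 0\<close> \<open>C \<ge> 0\<close> C, of u] \<open>CG \<ge> 0\<close>
        by (intro mult_mono) (simp_all add: d_def)
      finally show ?thesis by (simp add: power2_eq_square mult_ac)
    qed
    moreover have "row_prob * (g * norm u)\<^sup>2 \<le> row_prob * (norm (G *v u))\<^sup>2"
      using g[of u] \<open>g > 0\<close> row_prob_pos by (intro mult_left_mono power_mono) auto
    moreover have "lam * ((G *v u) \<bullet> (Pbar lam J k *v u)) = row_prob * (norm (G *v u))\<^sup>2 + (G *v u) \<bullet> d"
      by (simp add: d_def inner_diff_right power2_norm_eq_inner)
    moreover have "CG * C\<^sup>2 / lam * (norm u)\<^sup>2 \<le> \<gamma> * (norm u)\<^sup>2"
      using \<open>CG * C\<^sup>2 / lam \<le> \<gamma>\<close> by (rule mult_right_mono) simp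
    ultimately have "\<gamma> * (norm u)\<^sup>2 \<le> lam * ((G *v u) \<bullet> (Pbar lam J k *v u))"
      by (simp add: \<gamma>_def power_mult_distrib)
    then show ?thesis using \<open>lam > 0\<close> by (simp add: field_simps)
  qed
  then show thesis using that \<open>lam0 \<ge> 0\<close> \<open>\<gamma> > 0\<close> by blast
qed

lemma Mmat_coercive:
  obtains lam0 \<beta> where "lam0 \<ge> 0" and "\<beta> > 0"
    and "\<And>lam x. lam > lam0 \<Longrightarrow> \<beta> / lam * (norm x)\<^sup>2 \<le> x \<bullet> (K *v (Mmat lam J H k *v x))"
proof -
  obtain lam0 \<gamma> where "lam0 \<ge> 0" "\<gamma> > 0"
    and Pbar: "\<And>lam u. lam > lam0 \<Longrightarrow> \<gamma> / lam * (norm u)\<^sup>2 \<le> (G *v u) \<bullet> (Pbar lam J k *v u)"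
    using Pbar_coercive by blast
  obtain b where "b > 0" and b: "\<And>x. b * norm x \<le> norm (B *v x)"
    using matrix_vector_mult_bounded_below[OF B_inj] by blast
  have "\<gamma> * b\<^sup>2 / lam * (norm x)\<^sup>2 \<le> x \<bullet> (K *v (Mmat lam J H k *v x))" if "lam > lam0" for lam x
  proof -
    have "\<gamma> * b\<^sup>2 / lam * (norm x)\<^sup>2 = \<gamma> / lam * (b * norm x)\<^sup>2"
      by (simp add: power_mult_distrib)
    also have "\<dots> \<le> \<gamma> / lam * (norm (B *v x))\<^sup>2"
      using b[of x] \<open>b > 0\<close> \<open>\<gamma> > 0\<close> that \<open>lam0 \<ge> 0\<close>
      by (intro mult_left_mono power_mono) auto
    also have "\<dots> \<le> (G *v (B *v x)) \<bullet> (Pbar lam J k *v (B *v x))"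
      using Pbar[OF that] .
    also have "\<dots> = (Mmat lam J H k *v x) \<bullet> (K *v x)"
      by (simp add: K_eq Mmat_eq inner_commute matrix_vector_mul_assoc)
    also have "\<dots> = x \<bullet> (K *v (Mmat lam J H k *v x))"
      by (rule K_sym[symmetric])
    finally show ?thesis .
  qed
  then show thesis using that[of lam0 "\<gamma> * b\<^sup>2"] \<open>lam0 \<ge> 0\<close> \<open>\<gamma> > 0\<close> \<open>b > 0\<close> by simp
qed

lemma Pmat_B_bounded:
  assumes "lam > 0"
  obtains D where "\<And>S e. norm (Pmat lam J S *v (B *v e)) \<le> D * norm e"
proof -
  obtain C where "C \<ge> 0"
    and C: "\<And>S v. norm ((transpose (rowsel S ** J) ** (rowsel S ** J)) *v v) \<le> C * norm v"
    using batch_gram_bounded by blast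
  obtain CB where "CB \<ge> 0" and CB: "\<And>x. norm (B *v x) \<le> CB * norm x"
    using matrix_vector_mult_bounded[of B] by blast
  have "norm (Pmat lam J S *v (B *v e)) \<le> C * CB / lam * norm e" for S e
  proof -
    have "lam * norm (Pmat lam J S *v (B *v e)) \<le> C * norm (B *v e)"
      unfolding Pmat_def using norm_reg_pinv_mult_self_le[OF assms] C by (rule order.trans)
    also have "\<dots> \<le> C * (CB * norm e)"
      using CB \<open>C \<ge> 0\<close> by (rule mult_left_mono)
    finally show ?thesis using assms by (simp add: field_simps)
  qed
  then show thesis by (rule that)
qed

lemma sngd_expected_lyapunov_le:
  assumes "lam > 0" and "\<beta> > 0" and "eta > 0"
    and drift: "\<And>x. \<beta> * (norm x)\<^sup>2 \<le> x \<bullet> (K *v (Mmat lam J H k *v x))"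
    and "CK > 0" and CK: "\<And>x. x \<bullet> (K *v x) \<le> CK * (norm x)\<^sup>2"
    and D: "\<And>S e. norm (Pmat lam J S *v (B *v e)) \<le> D * norm e"
    and small: "eta * CK * D\<^sup>2 \<le> \<beta>"
  shows "(\<Sum>S\<in>batches k. (sngd_step lam eta J H q S \<theta> - \<theta>s) \<bullet> (K *v (sngd_step lam eta J H q S \<theta> - \<theta>s)))
      / card (batches k :: 'm set set) \<le> (1 - eta * \<beta> / CK) * ((\<theta> - \<theta>s) \<bullet> (K *v (\<theta> - \<theta>s)))"
proof -
  define e where "e = \<theta> - \<theta>s"
  define Z where "Z S = Pmat lam J S ** B" for S
  have "\<beta> * (norm e)\<^sup>2 \<le> (\<Sum>S\<in>batches k. e \<bullet> (K *v (Z S *v e))) / card (batches k :: 'm set set)"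
    using drift[of e]
    by (simp add: Mmat_mult Z_def matrix_vector_mult_scaleR matrix_vector_mult_sum inner_sum_right
        matrix_vector_mul_assoc[symmetric] divide_inverse mult.commute)
  moreover have "(Z S *v e) \<bullet> (K *v (Z S *v e)) \<le> CK * D\<^sup>2 * (norm e)\<^sup>2" for S
  proof -
    have "(Z S *v e) \<bullet> (K *v (Z S *v e)) \<le> CK * (norm (Z S *v e))\<^sup>2" by (rule CK)
    also have "\<dots> \<le> CK * (D * norm e)\<^sup>2"
      using D[of S e] \<open>CK > 0\<close>
      by (intro mult_left_mono power_mono) (simp_all add: Z_def matrix_vector_mul_assoc[symmetric])
    finally show ?thesis by (simp add: power_mult_distrib)
  qed
  ultimately show ?thesis
    using quadratic_lyapunov_avg_step[OF finite batches_nonempty[OF k_le] K_sym CK \<open>CK > 0\<close>,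
        of \<beta> e Z "CK * D\<^sup>2" eta] \<open>\<beta> > 0\<close> \<open>eta > 0\<close> small
    by (simp add: sngd_step_err e_def Z_def matrix_vector_mul_assoc[symmetric] mult.assoc)
qed

lemma msq_err_le_expected_lyapunov:
  assumes "\<alpha> > 0" and \<alpha>: "\<And>x. \<alpha> * (norm x)\<^sup>2 \<le> x \<bullet> (K *v x)"
  shows "msq_err lam eta J H q k \<theta>0 \<theta>s t
    \<le> measure_pmf.expectation (sngd_pmf lam eta J H q k \<theta>0 t) (\<lambda>\<theta>. (\<theta> - \<theta>s) \<bullet> (K *v (\<theta> - \<theta>s))) / \<alpha>"
proof -
  have "msq_err lam eta J H q k \<theta>0 \<theta>s t
      \<le> measure_pmf.expectation (sngd_pmf lam eta J H q k \<theta>0 t) (\<lambda>\<theta>. (\<theta> - \<theta>s) \<bullet> (K *v (\<theta> - \<theta>s)) / \<alpha>)"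
    unfolding msq_err_def using \<alpha> \<open>\<alpha> > 0\<close>
    by (intro integral_mono integrable_measure_pmf_finite finite_set_sngd_pmf)
      (simp add: pos_le_divide_eq mult.commute)
  then show ?thesis by simp
qed

lemma sngd_msq_err_tendsto_0:
  assumes "lam > 0" and "\<beta> > 0"
    and drift: "\<And>x. \<beta> * (norm x)\<^sup>2 \<le> x \<bullet> (K *v (Mmat lam J H k *v x))"
  obtains eta0 where "eta0 > 0"
    and "\<And>eta \<theta>0. 0 < eta \<Longrightarrow> eta < eta0 \<Longrightarrow> (\<lambda>t. msq_err lam eta J H q k \<theta>0 \<theta>s t) \<longlonglongrightarrow> 0"
proof -
  obtain CK where "CK > 0" and CK: "\<And>x. x \<bullet> (K *v x) \<le> CK * (norm x)\<^sup>2"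
    using K_bounded_above by blast
  obtain \<alpha> where "\<alpha> > 0" and \<alpha>: "\<And>x. \<alpha> * (norm x)\<^sup>2 \<le> x \<bullet> (K *v x)"
    using K_bounded_below by blast
  obtain D where D: "\<And>S e. norm (Pmat lam J S *v (B *v e)) \<le> D * norm e"
    using Pmat_B_bounded[OF \<open>lam > 0\<close>] by blast
  define eta0 where "eta0 = min (\<beta> / (CK * D\<^sup>2 + 1)) (CK / \<beta>)"
  have "CK * D\<^sup>2 + 1 > 0" using \<open>CK > 0\<close> by (simp add: add_nonneg_pos)
  then have "eta0 > 0" using \<open>\<beta> > 0\<close> \<open>CK > 0\<close> by (simp add: eta0_def)
  moreover have "(\<lambda>t. msq_err lam eta J H q k \<theta>0 \<theta>s t) \<longlonglongrightarrow> 0" if "0 < eta" "eta < eta0" for eta \<theta>0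
  proof -
    let ?V = "\<lambda>\<theta>. (\<theta> - \<theta>s) \<bullet> (K *v (\<theta> - \<theta>s))"
    let ?E = "\<lambda>t f. measure_pmf.expectation (sngd_pmf lam eta J H q k \<theta>0 t) f"
    define \<rho> where "\<rho> = 1 - eta * \<beta> / CK"
    have "eta * (CK * D\<^sup>2 + 1) < \<beta>"
      using that \<open>CK * D\<^sup>2 + 1 > 0\<close> by (simp add: eta0_def pos_less_divide_eq)
    then have small: "eta * CK * D\<^sup>2 \<le> \<beta>"
      using \<open>eta > 0\<close> by (simp add: algebra_simps)
    have "eta * \<beta> < CK"
      using that \<open>\<beta> > 0\<close> by (simp add: eta0_def pos_less_divide_eq mult.commute)
    then have "0 \<le> \<rho>" and "\<rho> < 1"
      using \<open>eta > 0\<close> \<open>\<beta> > 0\<close> \<open>CK > 0\<close> by (simp_all add: \<rho>_def)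
    have E_bound: "?E t ?V \<le> \<rho> ^ t * ?V \<theta>0" for t
      using expectation_iterate_uniform_le_power[where p = "sngd_pmf lam eta J H q k \<theta>0" and V = ?V,
          OF _ finite batches_nonempty[OF k_le] _ \<open>0 \<le> \<rho>\<close>]
        sngd_expected_lyapunov_le[OF \<open>lam > 0\<close> \<open>\<beta> > 0\<close> \<open>eta > 0\<close> drift \<open>CK > 0\<close> CK D small]
      by (simp add: \<rho>_def)
    have bound: "msq_err lam eta J H q k \<theta>0 \<theta>s t \<le> \<rho> ^ t * (?V \<theta>0 / \<alpha>)" for t
    proof -
      have "msq_err lam eta J H q k \<theta>0 \<theta>s t \<le> ?E t ?V / \<alpha>"
        by (rule msq_err_le_expected_lyapunov[OF \<open>\<alpha> > 0\<close> \<alpha>])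
      also have "\<dots> \<le> \<rho> ^ t * ?V \<theta>0 / \<alpha>"
        using \<open>\<alpha> > 0\<close> by (intro divide_right_mono E_bound) simp
      finally show ?thesis by simp
    qed
    have lim: "(\<lambda>t. \<rho> ^ t * (?V \<theta>0 / \<alpha>)) \<longlonglongrightarrow> 0"
      using \<open>0 \<le> \<rho>\<close> \<open>\<rho> < 1\<close> by (intro tendsto_mult_left_zero LIMSEQ_power_zero) simp
    have nonneg: "msq_err lam eta J H q k \<theta>0 \<theta>s t \<ge> 0" for t
      unfolding msq_err_def by (auto intro: integral_nonneg_AE)
    show ?thesis
      by (rule tendsto_sandwich[OF _ _ tendsto_const lim]) (use nonneg bound in auto)
  qed
  ultimately show thesis by (rule that)
qed

lemma expectation_sngd_err_inner:
  "measure_pmf.expectation (sngd_pmf lam eta J H q k \<theta>0 t) (\<lambda>\<theta>. (\<theta> - \<theta>s) \<bullet> w)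
    = richardson_iter (Mmat lam J H k) eta t (\<theta>0 - \<theta>s) \<bullet> w"
proof (induction t arbitrary: w)
  case (Suc t)
  let ?M = "Mmat lam J H k"
  let ?w' = "w - eta *\<^sub>R (transpose ?M *v w)"
  have avg: "(\<Sum>S\<in>batches k. (sngd_step lam eta J H q S \<theta> - \<theta>s) \<bullet> w) / card (batches k :: 'm set set)
      = (\<theta> - \<theta>s) \<bullet> ?w'" for \<theta>
  proof -
    let ?N = "real (card (batches k :: 'm set set))"
    let ?z = "\<lambda>S. Pmat lam J S *v (B *v (\<theta> - \<theta>s))"
    have sum_eq: "(\<Sum>S\<in>batches k. (sngd_step lam eta J H q S \<theta> - \<theta>s) \<bullet> w)
        = ?N * ((\<theta> - \<theta>s) \<bullet> w) - eta * (\<Sum>S\<in>batches k. ?z S \<bullet> w)"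
      by (simp add: sngd_step_err inner_diff_left sum_subtractf sum_distrib_left)
    have M_eq: "(\<Sum>S\<in>batches k. ?z S \<bullet> w) / ?N = (?M *v (\<theta> - \<theta>s)) \<bullet> w"
      by (simp add: Mmat_mult inner_sum_left divide_inverse mult.commute)
    have "(\<Sum>S\<in>batches k. (sngd_step lam eta J H q S \<theta> - \<theta>s) \<bullet> w) / ?N
        = (\<theta> - \<theta>s) \<bullet> w - eta * ((\<Sum>S\<in>batches k. ?z S \<bullet> w) / ?N)"
      unfolding sum_eq using card_batches_pos batches_nonempty[OF k_le] by (simp add: diff_divide_distrib)
    also have "\<dots> = (\<theta> - \<theta>s) \<bullet> w - eta * ((?M *v (\<theta> - \<theta>s)) \<bullet> w)"
      by (simp only: M_eq)
    also have "\<dots> = (\<theta> - \<theta>s) \<bullet> ?w'"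
      by (simp add: inner_diff_right inner_transpose_mult del: transpose_matrix_vector)
    finally show ?thesis .
  qed
  have "measure_pmf.expectation (sngd_pmf lam eta J H q k \<theta>0 (Suc t)) (\<lambda>\<theta>. (\<theta> - \<theta>s) \<bullet> w)
      = measure_pmf.expectation (sngd_pmf lam eta J H q k \<theta>0 t) (\<lambda>\<theta>. (\<theta> - \<theta>s) \<bullet> ?w')"
    by (simp only: expectation_sngd_pmf_Suc avg)
  also have "\<dots> = richardson_iter ?M eta t (\<theta>0 - \<theta>s) \<bullet> ?w'"
    by (rule Suc.IH)
  also have "\<dots> = richardson_iter ?M eta (Suc t) (\<theta>0 - \<theta>s) \<bullet> w"
    by (simp add: richardson_iter_Suc inner_diff_right inner_diff_left inner_transpose_mult
        del: transpose_matrix_vector)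
  finally show ?case .
qed simp

lemma norm_richardson_iter_le_msq_err:
  "(norm (richardson_iter (Mmat lam J H k) eta t (\<theta>0 - \<theta>s)))\<^sup>2 \<le> msq_err lam eta J H q k \<theta>0 \<theta>s t"
proof -
  define x where "x = richardson_iter (Mmat lam J H k) eta t (\<theta>0 - \<theta>s)"
  let ?E = "measure_pmf.expectation (sngd_pmf lam eta J H q k \<theta>0 t)"
  have "2 * ((\<theta> - \<theta>s) \<bullet> x) - (norm x)\<^sup>2 \<le> (norm (\<theta> - \<theta>s))\<^sup>2" for \<theta>
  proof -
    have "0 \<le> (norm ((\<theta> - \<theta>s) - x))\<^sup>2" by simp
    also have "\<dots> = (norm (\<theta> - \<theta>s))\<^sup>2 - 2 * ((\<theta> - \<theta>s) \<bullet> x) + (norm x)\<^sup>2"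
      by (simp add: power2_norm_eq_inner inner_diff_left inner_diff_right inner_commute)
    finally show ?thesis by simp
  qed
  then have "?E (\<lambda>\<theta>. 2 * ((\<theta> - \<theta>s) \<bullet> x) - (norm x)\<^sup>2) \<le> ?E (\<lambda>\<theta>. (norm (\<theta> - \<theta>s))\<^sup>2)"
    by (intro integral_mono integrable_measure_pmf_finite finite_set_sngd_pmf)
  moreover have "?E (\<lambda>\<theta>. 2 * ((\<theta> - \<theta>s) \<bullet> x) - (norm x)\<^sup>2) = 2 * ?E (\<lambda>\<theta>. (\<theta> - \<theta>s) \<bullet> x) - (norm x)\<^sup>2"
    by (simp add: integral_diff integrable_measure_pmf_finite[OF finite_set_sngd_pmf])
  moreover have "?E (\<lambda>\<theta>. (\<theta> - \<theta>s) \<bullet> x) = (norm x)\<^sup>2"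
    by (simp add: expectation_sngd_err_inner x_def power2_norm_eq_inner)
  ultimately show ?thesis unfolding msq_err_def x_def by simp
qed

lemma sngd_diverges:
  assumes "is_eigenvalue (Mmat lam J H k) \<mu>" and "Re \<mu> < 0"
  obtains \<theta>0 where "\<And>eta. eta > 0 \<Longrightarrow> \<not> (\<lambda>t. msq_err lam eta J H q k \<theta>0 \<theta>s t) \<longlonglongrightarrow> 0"
proof -
  obtain v j where v: "cmat (Mmat lam J H k) *v v = \<mu> *s v" and "Re (v $ j) \<noteq> 0"
    using eigenvector_with_Re_component[OF assms(1)] by blast
  have "\<not> (\<lambda>t. msq_err lam eta J H q k (\<theta>s + vec_Re v) \<theta>s t) \<longlonglongrightarrow> 0" if "eta > 0" for eta
  proof
    let ?\<omega> = "1 - of_real eta * \<mu>"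
    assume lim: "(\<lambda>t. msq_err lam eta J H q k (\<theta>s + vec_Re v) \<theta>s t) \<longlonglongrightarrow> 0"
    have bound: "\<bar>Re (?\<omega> ^ t * v $ j)\<bar> \<le> sqrt (msq_err lam eta J H q k (\<theta>s + vec_Re v) \<theta>s t)" for t
    proof -
      have "Re (?\<omega> ^ t * v $ j) = richardson_iter (Mmat lam J H k) eta t (vec_Re v) $ j"
        by (simp only: richardson_iter_vec_Re_eigenvector[OF v]) (simp add: vec_Re_def)
      also have "\<bar>\<dots>\<bar> \<le> norm (richardson_iter (Mmat lam J H k) eta t (vec_Re v))"
        by (rule component_le_norm_cart)
      also have "\<dots> \<le> sqrt (msq_err lam eta J H q k (\<theta>s + vec_Re v) \<theta>s t)"
        using norm_richardson_iter_le_msq_err[of lam eta t "\<theta>s + vec_Re v"] real_le_rsqrt by simp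
      finally show ?thesis .
    qed
    have sqrt_lim: "(\<lambda>t. sqrt (msq_err lam eta J H q k (\<theta>s + vec_Re v) \<theta>s t)) \<longlonglongrightarrow> 0"
      using tendsto_real_sqrt[OF lim] by simp
    have "(\<lambda>t. \<bar>Re (?\<omega> ^ t * v $ j)\<bar>) \<longlonglongrightarrow> 0"
      by (rule tendsto_sandwich[OF _ _ tendsto_const sqrt_lim]) (use bound in auto)
    then have "(\<lambda>t. Re (?\<omega> ^ t * v $ j)) \<longlonglongrightarrow> 0"
      by (simp add: tendsto_rabs_zero_iff)
    moreover have "1 \<le> norm ?\<omega>"
      using \<open>eta > 0\<close> \<open>Re \<mu> < 0\<close> abs_Re_le_cmod[of ?\<omega>] mult_pos_neg[of eta "Re \<mu>"] by simp
    ultimately show False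
      using Re_power_mult_not_tendsto_0 \<open>Re (v $ j) \<noteq> 0\<close> by blast
  qed
  then show thesis by (rule that)
qed


lemma sngd_diverges_if_xi_neg:
  assumes "xi J H k lam < 0"
  shows "\<exists>\<theta>0. \<forall>eta > 0. \<not> (\<lambda>t. msq_err lam eta J H q k \<theta>0 \<theta>s t) \<longlonglongrightarrow> 0"
proof -
  obtain \<mu> where "is_eigenvalue (Mmat lam J H k) \<mu>" and "Re \<mu> < 0"
    using assms by (auto simp: xi_def Min_Re_eigenvalues_neg_iff)
  then show ?thesis using sngd_diverges by metis
qed

lemma xi_pos_if_coercive:
  assumes "\<beta> > 0" and coercive: "\<And>x. \<beta> * (norm x)\<^sup>2 \<le> x \<bullet> (K *v (Mmat lam J H k *v x))"
  shows "xi J H k lam > 0"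
proof -
  have "x \<bullet> (K *v (Mmat lam J H k *v x)) > 0" if "x \<noteq> 0" for x
  proof -
    have "\<beta> * (norm x)\<^sup>2 > 0" using \<open>\<beta> > 0\<close> that by simp
    then show ?thesis using coercive[of x] by linarith
  qed
  then show ?thesis
    unfolding xi_def Min_Re_eigenvalues_pos_iff using eigenvalue_Re_pos[OF K_sym K_pos] by blast
qed

end

theorem proposition1:
  fixes J :: "real^'n::finite^'m::finite" and H :: "real^'m^'m"
    and q :: "real^'m" and c :: real and \<theta>s :: "real^'n" and k :: nat
  assumes full_rank: "rank J = CARD('n)"
    and H_sym: "transpose H = H"
    and H_pd: "\<And>x. x \<noteq> 0 \<Longrightarrow> x \<bullet> (H *v x) > 0"
    and opt: "\<And>v. quad_loss H q c (J *v \<theta>s) \<le> quad_loss H q c v"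
    and range_incl: "range (\<lambda>x. (H ** J) *v x) \<subseteq> range (\<lambda>x. J *v x)"
    and k_pos: "1 \<le> k" and k_le: "k \<le> CARD('m)"
  shows "(\<forall>lam \<ge> 0. xi J H k lam < 0 \<longrightarrow>
            (\<exists>\<theta>0. \<forall>eta > 0.
               \<not> ((\<lambda>t. msq_err lam eta J H q k \<theta>0 \<theta>s t) \<longlonglongrightarrow> 0)))
       \<and> (\<exists>lam0 \<ge> 0. \<forall>lam > lam0. xi J H k lam > 0 \<and>
            (\<exists>eta0 > 0. \<forall>eta. 0 < eta \<and> eta < eta0 \<longrightarrow>
               (\<forall>\<theta>0. (\<lambda>t. msq_err lam eta J H q k \<theta>0 \<theta>s t) \<longlonglongrightarrow> 0)))"
proof -
  interpret sngd_problem J H q \<theta>s k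
    using full_rank H_sym H_pd quad_loss_stationary[OF H_sym opt] range_incl k_pos k_le
    by unfold_locales
  obtain lam0 \<beta> where "lam0 \<ge> 0" and "\<beta> > 0"
    and coercive: "\<And>lam x. lam > lam0 \<Longrightarrow> \<beta> / lam * (norm x)\<^sup>2 \<le> x \<bullet> (K *v (Mmat lam J H k *v x))"
    using Mmat_coercive by blast
  have "xi J H k lam > 0 \<and> (\<exists>eta0 > 0. \<forall>eta. 0 < eta \<and> eta < eta0 \<longrightarrow>
      (\<forall>\<theta>0. (\<lambda>t. msq_err lam eta J H q k \<theta>0 \<theta>s t) \<longlonglongrightarrow> 0))" if large: "lam > lam0" for lam
  proof
    have "lam > 0" and "\<beta> / lam > 0" using large \<open>lam0 \<ge> 0\<close> \<open>\<beta> > 0\<close> by auto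
    then show "xi J H k lam > 0"
      using xi_pos_if_coercive coercive[OF large] by blast
    show "\<exists>eta0 > 0. \<forall>eta. 0 < eta \<and> eta < eta0 \<longrightarrow> (\<forall>\<theta>0. (\<lambda>t. msq_err lam eta J H q k \<theta>0 \<theta>s t) \<longlonglongrightarrow> 0)"
      using sngd_msq_err_tendsto_0[OF \<open>lam > 0\<close> \<open>\<beta> / lam > 0\<close> coercive[OF large]] by metis
  qed
  with sngd_diverges_if_xi_neg \<open>lam0 \<ge> 0\<close> show ?thesis by blast
qed

end
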